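(* Let $N\ge 2$ and $R\ge 3$, and let $S=\lfloor R/3\rfloor$. For every $c<2-\tfrac{1}{2^S}$, there is no $c$-approximation randomized online algorithm for the minimum congestion routing problem in the Clos network $C_{N,R}$.
   Context: Clos network $C_{N,R}$: a directed graph with $N$ middle switches $M_1,\dots,M_N$, $R$ input switches $I_1,\dots,I_R$, $R$ output switches $O_1,\dots,O_R$, source servers $s_i^k$ and destination servers $t_i^k$ ($i\in[R]$, $k\in[N]$), and edges $s_i^kI_i$, $I_iM_m$, $M_mO_i$, $O_it_i^k$ for all $i\in[R]$, $m,k\in[N]$; all links have capacity $1$. A flow $f$ has a source server $s(f)$ of input switch $I_{i(f)}$, a destination server $t(f)$ of output switch $O_{j(f)}$, and a positive demand $\mathrm{dem}(f)$; a set of flows must have total demand at most $1$ leaving each source server and entering each destination server. A routing $r$ assigns each flow a single middle switch $r(f)\in[N]$; its congestion is $\max_{i\in[R],m\in[N]}\max\{\sum_{f:i(f)=i,r(f)=m}\mathrm{dem}(f),\ \sum_{f:j(f)=i,r(f)=m}\mathrm{dem}(f)\}$; $OPT(\mathcal{F})$ is the minimum congestion over all routings of $\mathcal{F}$. A deterministic online algorithm defines a routing for every sequence of flows such that for every prefix $P$ of a sequence $F$, the routing of $P$ when given $P$ equals the routing of $P$ when given $F$. A randomized online algorithm is a probability distribution over deterministic online algorithms; it is a $c$-approximation if for every sequence $\mathcal{F}$ of flows its expected congestion is at most $c\cdot OPT(\mathcal{F})$. *)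

theory Defs
  imports "HOL-Probability.Probability"
begin

text \<open>Indices are 0-based: input/output switches 0..<R,
  middle switches 0..<N, servers of each switch 0..<N.
  A flow records: index of the input switch i(f), index k of its source server s_{i(f)}^k,
  index of the output switch j(f), index of its destination server t_{j(f)}^k', and its demand.\<close>

datatype flow = Flow (src_sw: nat) (src_srv: nat) (dst_sw: nat) (dst_srv: nat) (dem: real)

definition valid_seq :: "nat \<Rightarrow> nat \<Rightarrow> flow list \<Rightarrow> bool" where
  "valid_seq N R F \<longleftrightarrow>
     (\<forall>f\<in>set F. src_sw f < R \<and> src_srv f < N \<and> dst_sw f < R \<and> dst_srv f < N \<and> dem f > 0) \<and>
     (\<forall>i<R. \<forall>k<N. (\<Sum>p\<in>{p. p < length F \<and> src_sw (F!p) = i \<and> src_srv (F!p) = k}. dem (F!p)) \<le> 1) \<and>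
     (\<forall>i<R. \<forall>k<N. (\<Sum>p\<in>{p. p < length F \<and> dst_sw (F!p) = i \<and> dst_srv (F!p) = k}. dem (F!p)) \<le> 1)"

text \<open>A routing of F: the p-th flow is routed through middle switch r!p.\<close>
definition is_routing :: "nat \<Rightarrow> flow list \<Rightarrow> nat list \<Rightarrow> bool" where
  "is_routing N F r \<longleftrightarrow> length r = length F \<and> (\<forall>m\<in>set r. m < N)"

definition load_in :: "flow list \<Rightarrow> nat list \<Rightarrow> nat \<Rightarrow> nat \<Rightarrow> real" where
  "load_in F r i m = (\<Sum>p\<in>{p. p < length F \<and> src_sw (F!p) = i \<and> r!p = m}. dem (F!p))"

definition load_out :: "flow list \<Rightarrow> nat list \<Rightarrow> nat \<Rightarrow> nat \<Rightarrow> real" where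
  "load_out F r i m = (\<Sum>p\<in>{p. p < length F \<and> dst_sw (F!p) = i \<and> r!p = m}. dem (F!p))"

definition congestion :: "nat \<Rightarrow> nat \<Rightarrow> flow list \<Rightarrow> nat list \<Rightarrow> real" where
  "congestion N R F r = Max ((\<lambda>(i, m). max (load_in F r i m) (load_out F r i m)) ` ({..<R} \<times> {..<N}))"

definition OPT :: "nat \<Rightarrow> nat \<Rightarrow> flow list \<Rightarrow> real" where
  "OPT N R F = Min (congestion N R F ` {r. is_routing N F r})"

definition det_online_alg :: "nat \<Rightarrow> nat \<Rightarrow> (flow list \<Rightarrow> nat list) \<Rightarrow> bool" where
  "det_online_alg N R A \<longleftrightarrow>
     (\<forall>F. valid_seq N R F \<longrightarrow>
        is_routing N F (A F) \<and> (\<forall>k\<le>length F. A (take k F) = take k (A F)))"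

text \<open>Randomized online algorithm: a probability distribution (probability space M) over
  deterministic online algorithms (A \<omega> for \<omega> in the sample space); it is a c-approximation
  if its expected congestion is at most c * OPT on every admissible sequence.\<close>
definition randomized_approx ::
  "nat \<Rightarrow> nat \<Rightarrow> real \<Rightarrow> 'a measure \<Rightarrow> ('a \<Rightarrow> flow list \<Rightarrow> nat list) \<Rightarrow> bool" where
  "randomized_approx N R c M A \<longleftrightarrow>
     prob_space M \<and>
     (\<forall>\<omega>\<in>space M. det_online_alg N R (A \<omega>)) \<and>
     (\<forall>F. valid_seq N R F \<longrightarrow> (\<lambda>\<omega>. A \<omega> F) \<in> M \<rightarrow>\<^sub>M count_space UNIV) \<and>
     (\<forall>F. valid_seq N R F \<longrightarrow>
        (\<integral>\<omega>. congestion N R F (A \<omega> F) \<partial>M) \<le> c * OPT N R F)"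

end

theory Submission
  imports Defs
begin

(* The adversary uses S = R div 3 gadgets on disjoint switch triples 3g, 3g+1, 3g+2, each hiding
   one bit. For unit demands a routing has congestion 1 iff no two flows sharing an input or an
   output switch share a middle switch, and congestion at least 2 otherwise. The first two flows
   of gadget g go from I_3g to O_3g and from I_3g+1 to O_3g+1; by pigeonhole over the N middle
   switches, the flows that follow force every congestion-1 routing to put these two flows on the
   same middle switch if the bit is False and on different ones if it is True. An online algorithm
   routes them before it sees the bit, so a deterministic algorithm achieves congestion 1 on at
   most one of the 2^S bit strings. Hence for some bit string the randomized algorithm achieves
   congestion 1 with probability at most 2^-S, and its expected congestion is at least 2 - 2^-S,
   while OPT = 1. *)

definition conflict_free :: "flow list \<Rightarrow> nat list \<Rightarrow> bool" where
  "conflict_free F r \<longleftrightarrow> distinct (zip (map src_sw F) r) \<and> distinct (zip (map dst_sw F) r)"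

definition distinct_endpoints :: "flow list \<Rightarrow> bool" where
  "distinct_endpoints F \<longleftrightarrow>
     distinct (map (\<lambda>f. (src_sw f, src_srv f)) F) \<and> distinct (map (\<lambda>f. (dst_sw f, dst_srv f)) F)"

lemma conflict_free_nthD:
  assumes "conflict_free F r" "length r = length F" "p < length F" "q < length F" "p \<noteq> q"
    and "src_sw (F!p) = src_sw (F!q) \<or> dst_sw (F!p) = dst_sw (F!q)"
  shows "r!p \<noteq> r!q"
  using assms unfolding conflict_free_def distinct_conv_nth by auto

lemma conflict_free_append:
  assumes "conflict_free F r" "conflict_free F' r'" "length r = length F"
    and "\<And>f f'. f \<in> set F \<Longrightarrow> f' \<in> set F' \<Longrightarrow> src_sw f \<noteq> src_sw f' \<and> dst_sw f \<noteq> dst_sw f'"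
  shows "conflict_free (F @ F') (r @ r')"
  using assms unfolding conflict_free_def
  by (fastforce simp: zip_append dest: set_zip_leftD)

lemma distinct_endpoints_append:
  assumes "distinct_endpoints F" "distinct_endpoints F'"
    and "\<And>f f'. f \<in> set F \<Longrightarrow> f' \<in> set F' \<Longrightarrow> src_sw f \<noteq> src_sw f' \<and> dst_sw f \<noteq> dst_sw f'"
  shows "distinct_endpoints (F @ F')"
  using assms unfolding distinct_endpoints_def by fastforce

lemma is_routing_nth_less: "is_routing N F r \<Longrightarrow> p < length F \<Longrightarrow> r!p < N"
  unfolding is_routing_def by (metis nth_mem)

lemma valid_seq_pos: "valid_seq N R F \<Longrightarrow> F \<noteq> [] \<Longrightarrow> 0 < R \<and> 0 < N"
  unfolding valid_seq_def by (auto simp: neq_Nil_conv)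

lemma sum_unit_demands:
  assumes "\<forall>f\<in>set F. dem f = 1" "P \<subseteq> {..<length F}"
  shows "(\<Sum>p\<in>P. dem (F!p)) = card P"
  using assms by (simp add: subset_iff)

lemma valid_seq_if_distinct_endpoints:
  assumes "\<forall>f\<in>set F. src_sw f < R \<and> src_srv f < N \<and> dst_sw f < R \<and> dst_srv f < N \<and> dem f = 1"
    and "distinct_endpoints F"
  shows "valid_seq N R F"
proof -
  have unit: "\<forall>f\<in>set F. dem f = 1" using assms(1) by blast
  have "card {p. p < length F \<and> src_sw (F!p) = i \<and> src_srv (F!p) = k} \<le> 1"
    and "card {p. p < length F \<and> dst_sw (F!p) = i \<and> dst_srv (F!p) = k} \<le> 1" for i k
    using assms(2) unfolding distinct_endpoints_def distinct_conv_nth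
    by (auto simp: card_le_Suc0_iff_eq)
  with assms show ?thesis
    unfolding valid_seq_def by (subst (1 2) sum_unit_demands[OF unit]) auto
qed

lemma load_in_unit_demands:
  "\<forall>f\<in>set F. dem f = 1 \<Longrightarrow> load_in F r i m = card {p. p < length F \<and> src_sw (F!p) = i \<and> r!p = m}"
  unfolding load_in_def by (rule sum_unit_demands) auto

lemma load_out_unit_demands:
  "\<forall>f\<in>set F. dem f = 1 \<Longrightarrow> load_out F r i m = card {p. p < length F \<and> dst_sw (F!p) = i \<and> r!p = m}"
  unfolding load_out_def by (rule sum_unit_demands) auto

lemma load_le_congestion:
  assumes "i < R" "m < N"
  shows "load_in F r i m \<le> congestion N R F r" "load_out F r i m \<le> congestion N R F r"
proof -
  have "max (load_in F r i m) (load_out F r i m) \<le> congestion N R F r"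
    unfolding congestion_def by (rule Max_ge) (use assms in auto)
  then show "load_in F r i m \<le> congestion N R F r" "load_out F r i m \<le> congestion N R F r"
    by auto
qed

lemma congestion_le:
  assumes "0 < R" "0 < N"
    and "\<And>i m. i < R \<Longrightarrow> m < N \<Longrightarrow> load_in F r i m \<le> x \<and> load_out F r i m \<le> x"
  shows "congestion N R F r \<le> x"
  unfolding congestion_def by (rule Max.boundedI) (use assms in auto)

lemma congestion_le_length:
  assumes "\<forall>f\<in>set F. dem f = 1" "0 < R" "0 < N"
  shows "congestion N R F r \<le> length F"
proof (rule congestion_le[OF assms(2,3)])
  fix i m
  have "card {p. p < length F \<and> P p} \<le> length F" for P
    using card_mono[of "{..<length F}" "{p. p < length F \<and> P p}"] by auto
  then show "load_in F r i m \<le> length F \<and> load_out F r i m \<le> length F"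
    by (simp add: load_in_unit_demands[OF assms(1)] load_out_unit_demands[OF assms(1)])
qed

lemma congestion_le_1_if_conflict_free:
  assumes "\<forall>f\<in>set F. dem f = 1" "0 < R" "0 < N" "length r = length F" "conflict_free F r"
  shows "congestion N R F r \<le> 1"
proof (rule congestion_le[OF assms(2,3)])
  fix i m
  have "card {p. p < length F \<and> src_sw (F!p) = i \<and> r!p = m} \<le> 1"
    and "card {p. p < length F \<and> dst_sw (F!p) = i \<and> r!p = m} \<le> 1"
    using conflict_free_nthD[OF assms(5,4)] by (auto simp: card_le_Suc0_iff_eq)
  then show "load_in F r i m \<le> 1 \<and> load_out F r i m \<le> 1"
    by (simp add: load_in_unit_demands[OF assms(1)] load_out_unit_demands[OF assms(1)])
qed

lemma card_le_congestion:
  assumes unit: "\<forall>f\<in>set F. dem f = 1" and "valid_seq N R F" "is_routing N F r" "p < length F"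
    and Q: "Q \<subseteq> {q. q < length F \<and> src_sw (F!q) = src_sw (F!p) \<and> r!q = r!p}
       \<or> Q \<subseteq> {q. q < length F \<and> dst_sw (F!q) = dst_sw (F!p) \<and> r!q = r!p}"
  shows "card Q \<le> congestion N R F r"
proof -
  have bounds: "src_sw (F!p) < R" "dst_sw (F!p) < R" "r!p < N"
    using assms(2-4) is_routing_nth_less unfolding valid_seq_def by (auto simp: nth_mem)
  from Q show ?thesis
  proof
    assume "Q \<subseteq> {q. q < length F \<and> src_sw (F!q) = src_sw (F!p) \<and> r!q = r!p}"
    then have "card Q \<le> load_in F r (src_sw (F!p)) (r!p)"
      by (simp add: load_in_unit_demands[OF unit] card_mono)
    also have "\<dots> \<le> congestion N R F r" using bounds by (simp add: load_le_congestion)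
    finally show ?thesis .
  next
    assume "Q \<subseteq> {q. q < length F \<and> dst_sw (F!q) = dst_sw (F!p) \<and> r!q = r!p}"
    then have "card Q \<le> load_out F r (dst_sw (F!p)) (r!p)"
      by (simp add: load_out_unit_demands[OF unit] card_mono)
    also have "\<dots> \<le> congestion N R F r" using bounds by (simp add: load_le_congestion)
    finally show ?thesis .
  qed
qed

lemma one_le_congestion:
  assumes "\<forall>f\<in>set F. dem f = 1" "valid_seq N R F" "is_routing N F r" "F \<noteq> []"
  shows "1 \<le> congestion N R F r"
  using card_le_congestion[OF assms(1-3), of 0 "{0}"] assms(4) by simp

lemma two_le_congestion_if_not_conflict_free:
  assumes "\<forall>f\<in>set F. dem f = 1" "valid_seq N R F" "is_routing N F r" "\<not> conflict_free F r"
  shows "2 \<le> congestion N R F r"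
proof -
  have "length r = length F" using assms(3) by (simp add: is_routing_def)
  with assms(4) obtain p q where pq: "p < length F" "q < length F" "p \<noteq> q" "r!p = r!q"
    and "src_sw (F!p) = src_sw (F!q) \<or> dst_sw (F!p) = dst_sw (F!q)"
    unfolding conflict_free_def distinct_conv_nth by auto
  then have "card {p, q} \<le> congestion N R F r"
    by (intro card_le_congestion[OF assms(1-3) pq(1)]) auto
  with pq(3) show ?thesis by simp
qed

lemma finite_routings: "finite {r. is_routing N F r}"
proof -
  have "{r. is_routing N F r} = {r. set r \<subseteq> {..<N} \<and> length r = length F}"
    unfolding is_routing_def by auto
  then show ?thesis by (simp add: finite_lists_length_eq)
qed

lemma OPT_eq_1_if_conflict_free:
  assumes unit: "\<forall>f\<in>set F. dem f = 1" and valid: "valid_seq N R F" and "F \<noteq> []"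
    and r: "is_routing N F r" "conflict_free F r"
  shows "OPT N R F = 1"
proof (rule antisym)
  have "0 < R" "0 < N" using valid_seq_pos[OF valid \<open>F \<noteq> []\<close>] by auto
  have "OPT N R F \<le> congestion N R F r"
    unfolding OPT_def by (rule Min_le) (use finite_routings r in auto)
  also have "\<dots> \<le> 1"
    using r \<open>0 < R\<close> \<open>0 < N\<close>
    by (intro congestion_le_1_if_conflict_free[OF unit]) (auto simp: is_routing_def)
  finally show "OPT N R F \<le> 1" .
  have "OPT N R F \<in> congestion N R F ` {r. is_routing N F r}"
    unfolding OPT_def by (rule Min_in) (use finite_routings r in auto)
  then show "1 \<le> OPT N R F"
    using one_le_congestion[OF unit valid _ \<open>F \<noteq> []\<close>] by auto
qed

lemma conflict_free_pigeonhole: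
  assumes cf: "conflict_free F r" and r: "is_routing N F r"
    and Q: "Q \<subseteq> {..<length F}" "\<forall>p\<in>Q. src_sw (F!p) = i"
    and D: "D \<subseteq> {..<N}" "\<forall>p\<in>Q. r!p \<notin> D"
  shows "card Q + card D \<le> N"
proof -
  have len: "length r = length F" and mid: "\<forall>p<length F. r!p < N"
    using r is_routing_nth_less by (auto simp: is_routing_def)
  have "inj_on (\<lambda>p. r!p) Q"
  proof (rule inj_onI, rule ccontr)
    fix p q assume "p \<in> Q" "q \<in> Q" "r!p = r!q" "p \<noteq> q"
    then show False using conflict_free_nthD[OF cf len, of p q] Q by auto
  qed
  moreover have "(\<lambda>p. r!p) ` Q \<subseteq> {..<N} - D"
    using Q D mid by auto
  ultimately have "card Q \<le> card ({..<N} - D)"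
    by (intro card_inj_on_le) auto
  also have "\<dots> = N - card D"
    using D by (simp add: card_Diff_subset finite_subset)
  finally show ?thesis
    using card_mono[OF _ D(1)] by simp
qed

definition gadget :: "nat \<Rightarrow> nat \<Rightarrow> bool \<Rightarrow> flow list" where
  "gadget N g b =
     [Flow (3*g) 0 (3*g) 0 1, Flow (3*g+1) 0 (3*g+1) 0 1] @
     (if b then Flow (3*g+2) 0 (3*g) 1 1 # map (\<lambda>k. Flow (3*g+2) k (3*g+1) k 1) [1..<N]
      else map (\<lambda>k. Flow (3*g) k (3*g+1) k 1) [1..<N])"

fun gadgets :: "nat \<Rightarrow> nat \<Rightarrow> bool list \<Rightarrow> flow list" where
  "gadgets N g [] = []"
| "gadgets N g (b # bs) = gadget N g b @ gadgets N (Suc g) bs"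

definition gadget_routing :: "nat \<Rightarrow> bool \<Rightarrow> nat list" where
  "gadget_routing N b =
     (if b then [0, 1, 1] @ map (\<lambda>k. if k = 1 then 0 else k) [1..<N] else [0, 0] @ [1..<N])"

lemma gadgets_append:
  "gadgets N g (us @ vs) = gadgets N g us @ gadgets N (g + length us) vs"
  by (induction us arbitrary: g) auto

lemma gadgets_eq_Nil_iff [simp]: "gadgets N g bs = [] \<longleftrightarrow> bs = []"
  by (cases bs) (simp_all add: gadget_def)

lemma set_gadgets_switches:
  assumes "f \<in> set (gadgets N g bs)"
  shows "src_sw f \<in> {3*g..<3*(g + length bs)} \<and> dst_sw f \<in> {3*g..<3*(g + length bs)}"
  using assms
proof (induction bs arbitrary: g)
  case (Cons b bs)
  then consider "f \<in> set (gadget N g b)" | "f \<in> set (gadgets N (Suc g) bs)" by auto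
  then show ?case
  proof cases
    case 1
    then show ?thesis by (auto simp: gadget_def split: if_splits)
  next
    case 2
    from Cons.IH[OF this] show ?thesis by auto
  qed
qed simp

lemma gadget_gadgets_disjoint_switches:
  assumes "f \<in> set (gadget N g b)" "f' \<in> set (gadgets N (Suc g) bs)"
  shows "src_sw f \<noteq> src_sw f' \<and> dst_sw f \<noteq> dst_sw f'"
proof -
  have "src_sw f < 3*g + 3" "dst_sw f < 3*g + 3"
    using assms(1) by (auto simp: gadget_def split: if_splits)
  with set_gadgets_switches[OF assms(2)] show ?thesis by auto
qed

lemma set_gadgets_servers_demands:
  assumes "2 \<le> N" "f \<in> set (gadgets N g bs)"
  shows "src_srv f < N \<and> dst_srv f < N \<and> dem f = 1"
  using assms(2)
  by (induction bs arbitrary: g) (use assms(1) in \<open>auto simp: gadget_def split: if_splits\<close>)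

lemma distinct_endpoints_gadgets: "distinct_endpoints (gadgets N g bs)"
proof (induction bs arbitrary: g)
  case (Cons b bs)
  have "distinct_endpoints (gadget N g b)"
    by (auto simp: gadget_def distinct_endpoints_def distinct_map inj_on_def)
  from distinct_endpoints_append[OF this Cons.IH gadget_gadgets_disjoint_switches]
  show ?case by simp
qed (simp add: distinct_endpoints_def)

lemma conflict_free_gadgets_routing:
  "length (concat (map (gadget_routing N) bs)) = length (gadgets N g bs)
   \<and> conflict_free (gadgets N g bs) (concat (map (gadget_routing N) bs))"
proof (induction bs arbitrary: g)
  case (Cons b bs)
  have "length (gadget_routing N b) = length (gadget N g b)"
    by (simp add: gadget_routing_def gadget_def)
  moreover have "conflict_free (gadget N g b) (gadget_routing N b)"
    by (cases b) (auto simp: gadget_def gadget_routing_def conflict_free_def distinct_map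
        inj_on_def zip_map1 zip_map2 zip_same_conv_map split: if_splits)
  ultimately show ?case
    using Cons.IH[of "Suc g"] conflict_free_append[OF _ _ _ gadget_gadgets_disjoint_switches]
    by simp
qed (simp add: conflict_free_def)

lemma valid_seq_gadgets:
  assumes "2 \<le> N" "3 * length bs \<le> R"
  shows "valid_seq N R (gadgets N 0 bs)"
  using assms set_gadgets_switches[of _ N 0 bs] set_gadgets_servers_demands[OF assms(1)]
  by (intro valid_seq_if_distinct_endpoints distinct_endpoints_gadgets) fastforce

lemma OPT_gadgets:
  assumes "2 \<le> N" "3 * length bs \<le> R" "bs \<noteq> []"
  shows "OPT N R (gadgets N 0 bs) = 1"
proof (rule OPT_eq_1_if_conflict_free)
  show "\<forall>f\<in>set (gadgets N 0 bs). dem f = 1"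
    using set_gadgets_servers_demands[OF assms(1)] by blast
  show "valid_seq N R (gadgets N 0 bs)" using assms(1,2) by (rule valid_seq_gadgets)
  show "gadgets N 0 bs \<noteq> []" using assms(3) by simp
  show "is_routing N (gadgets N 0 bs) (concat (map (gadget_routing N) bs))"
    using conflict_free_gadgets_routing[of N bs 0] assms(1)
    by (auto simp: is_routing_def gadget_routing_def split: if_splits)
  show "conflict_free (gadgets N 0 bs) (concat (map (gadget_routing N) bs))"
    using conflict_free_gadgets_routing by blast
qed

(* The N - 1 flows from I_3g to O_3g+1 need distinct middle switches, avoiding those of both
   first flows. *)
lemma conflict_free_gadget_False:
  assumes cf: "conflict_free (P @ gadget N g False @ X) r"
    and r: "is_routing N (P @ gadget N g False @ X) r" and "2 \<le> N"
  shows "r ! length P = r ! Suc (length P)"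
proof (rule ccontr)
  define F q where "F = P @ gadget N g False @ X" and "q = length P"
  note cf = cf[folded F_def] and r = r[folded F_def]
  assume "r ! length P \<noteq> r ! Suc (length P)"
  then have card_D: "card {r!q, r!Suc q} = 2" by (simp add: q_def)
  have len: "length r = length F" "q + N + 1 \<le> length F"
    using r by (auto simp: F_def q_def is_routing_def gadget_def)
  have F_q: "F!q = Flow (3*g) 0 (3*g) 0 1" "F!Suc q = Flow (3*g+1) 0 (3*g+1) 0 1"
    by (simp_all add: F_def q_def gadget_def nth_append)
  have F_p: "src_sw (F!p) = 3*g \<and> dst_sw (F!p) = 3*g+1" if "p \<in> {q+2..<q+N+1}" for p
    using that by (auto simp: F_def q_def gadget_def nth_append)
  have "card {q+2..<q+N+1} + card {r!q, r!Suc q} \<le> N"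
  proof (rule conflict_free_pigeonhole[OF cf r])
    show "{q+2..<q+N+1} \<subseteq> {..<length F}" using len by auto
    show "\<forall>p\<in>{q+2..<q+N+1}. src_sw (F!p) = 3*g" using F_p by blast
    show "{r!q, r!Suc q} \<subseteq> {..<N}"
      using is_routing_nth_less[OF r] len \<open>2 \<le> N\<close> by auto
    show "\<forall>p\<in>{q+2..<q+N+1}. r!p \<notin> {r!q, r!Suc q}"
      using conflict_free_nthD[OF cf len(1)] F_p F_q len(2) by force
  qed
  with card_D \<open>2 \<le> N\<close> show False by simp
qed

(* The N flows out of I_3g+2 need distinct middle switches, all avoiding the common middle switch
   of the first two flows. *)
lemma conflict_free_gadget_True:
  assumes cf: "conflict_free (P @ gadget N g True @ X) r"
    and r: "is_routing N (P @ gadget N g True @ X) r" and "2 \<le> N"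
  shows "r ! length P \<noteq> r ! Suc (length P)"
proof
  define F q where "F = P @ gadget N g True @ X" and "q = length P"
  note cf = cf[folded F_def] and r = r[folded F_def]
  assume "r ! length P = r ! Suc (length P)"
  then have same: "r!q = r!Suc q" by (simp add: q_def)
  have len: "length r = length F" "q + N + 2 \<le> length F"
    using r by (auto simp: F_def q_def is_routing_def gadget_def)
  have F_q: "F!q = Flow (3*g) 0 (3*g) 0 1" "F!Suc q = Flow (3*g+1) 0 (3*g+1) 0 1"
    by (simp_all add: F_def q_def gadget_def nth_append)
  have F_p: "src_sw (F!p) = 3*g+2 \<and> dst_sw (F!p) = (if p = q+2 then 3*g else 3*g+1)"
    if "p \<in> {q+2..<q+N+2}" for p
    using that by (auto simp: F_def q_def gadget_def nth_append nth_Cons')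
  have "card {q+2..<q+N+2} + card {r!q} \<le> N"
  proof (rule conflict_free_pigeonhole[OF cf r])
    show "{q+2..<q+N+2} \<subseteq> {..<length F}" using len by auto
    show "\<forall>p\<in>{q+2..<q+N+2}. src_sw (F!p) = 3*g+2" using F_p by blast
    show "{r!q} \<subseteq> {..<N}"
      using is_routing_nth_less[OF r] len by auto
    show "\<forall>p\<in>{q+2..<q+N+2}. r!p \<notin> {r!q}"
    proof
      fix p assume p: "p \<in> {q+2..<q+N+2}"
      then have p_pos: "p < length F" "p \<noteq> q" "p \<noteq> Suc q" "Suc q < length F" using len by auto
      note no_share = conflict_free_nthD[OF cf len(1) p_pos(1)]
      show "r!p \<notin> {r!q}"
      proof (cases "p = q+2")
        case True
        then show ?thesis using no_share[of q] p_pos F_p[OF p] F_q by auto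
      next
        case False
        then show ?thesis using no_share[of "Suc q"] p_pos F_p[OF p] F_q same by auto
      qed
    qed
  qed
  then show False by simp
qed

lemma conflict_free_gadget_middles:
  assumes "conflict_free (P @ gadget N g b @ X) r" "is_routing N (P @ gadget N g b @ X) r" "2 \<le> N"
  shows "r ! length P = r ! Suc (length P) \<longleftrightarrow> \<not> b"
  using assms conflict_free_gadget_False conflict_free_gadget_True by (cases b) auto

lemma det_online_alg_common_prefix:
  assumes B: "det_online_alg N R B" and "valid_seq N R F" "valid_seq N R F'"
    and "k \<le> length F" "k \<le> length F'" "take k F = take k F'"
  shows "take k (B F) = take k (B F')"
proof -
  have "take k (B F) = B (take k F)" "take k (B F') = B (take k F')"
    using B assms(2-5) unfolding det_online_alg_def by simp_all
  with assms(6) show ?thesis by simp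
qed

(* At the first gadget where bs and bs' differ, the algorithm has routed the first two flows before
   the bit is revealed. *)
lemma det_online_alg_conflict_free_gadgets_unique:
  assumes B: "det_online_alg N R B" and "2 \<le> N"
    and len: "length bs' = length bs" "3 * length bs \<le> R"
    and cf: "conflict_free (gadgets N 0 bs) (B (gadgets N 0 bs))"
      "conflict_free (gadgets N 0 bs') (B (gadgets N 0 bs'))"
  shows "bs = bs'"
proof (rule ccontr)
  assume "bs \<noteq> bs'"
  obtain us vs vs' where "bs = us @ vs" "bs' = us @ vs'" "vs = [] \<or> vs' = [] \<or> hd vs \<noteq> hd vs'"
    using longest_common_prefix by blast
  with \<open>bs \<noteq> bs'\<close> len(1) obtain b v v' where split: "bs = us @ b # v" "bs' = us @ (\<not> b) # v'"
    by (cases vs; cases vs') auto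
  define P F F' where "P = gadgets N 0 us" and "F = gadgets N 0 bs" and "F' = gadgets N 0 bs'"
  have F: "F = P @ gadget N (length us) b @ gadgets N (Suc (length us)) v"
    and F': "F' = P @ gadget N (length us) (\<not> b) @ gadgets N (Suc (length us)) v'"
    by (simp_all add: P_def F_def F'_def split gadgets_append)
  have valid: "valid_seq N R F" "valid_seq N R F'"
    using valid_seq_gadgets[OF \<open>2 \<le> N\<close>] len by (simp_all add: F_def F'_def)
  then have routing: "is_routing N F (B F)" "is_routing N F' (B F')"
    using B unfolding det_online_alg_def by blast+
  have "take (length P + 2) (B F) = take (length P + 2) (B F')"
    by (rule det_online_alg_common_prefix[OF B valid]) (simp_all add: F F' gadget_def)
  then have "B F ! i = B F' ! i" if "i < length P + 2" for i
    by (metis nth_take that)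
  moreover have "B F ! length P = B F ! Suc (length P) \<longleftrightarrow> \<not> b"
    using conflict_free_gadget_middles[of P N "length us" b "gadgets N (Suc (length us)) v" "B F"]
      cf(1) routing(1) \<open>2 \<le> N\<close>
    by (simp add: F_def[symmetric] F[symmetric])
  moreover have "B F' ! length P = B F' ! Suc (length P) \<longleftrightarrow> b"
    using conflict_free_gadget_middles[of P N "length us" "\<not> b" "gadgets N (Suc (length us)) v'" "B F'"]
      cf(2) routing(2) \<open>2 \<le> N\<close>
    by (simp add: F'_def[symmetric] F'[symmetric])
  ultimately show False by auto
qed

lemma (in prob_space) ex_prob_le_inverse_card:
  assumes "finite I" "I \<noteq> {}" "disjoint_family_on E I" "E ` I \<subseteq> events"
  shows "\<exists>i\<in>I. prob (E i) \<le> 1 / card I"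
proof (rule ccontr)
  assume "\<not> (\<exists>i\<in>I. prob (E i) \<le> 1 / card I)"
  then have "(\<Sum>i\<in>I. 1 / card I) < (\<Sum>i\<in>I. prob (E i))"
    using assms(1,2) by (intro sum_strict_mono) auto
  also have "\<dots> = prob (\<Union>i\<in>I. E i)"
    using assms by (intro finite_measure_finite_Union[symmetric]) auto
  also have "\<dots> \<le> 1" by (rule prob_le_1)
  finally show False using assms(1,2) by simp
qed

lemma (in prob_space) two_minus_prob_le_integral:
  assumes X: "integrable M X" and E: "E \<in> events"
    and "\<forall>\<omega>\<in>space M. 1 \<le> X \<omega>" "\<forall>\<omega>\<in>space M - E. 2 \<le> X \<omega>"
  shows "2 - prob E \<le> (\<integral>\<omega>. X \<omega> \<partial>M)"
proof -
  have ind: "integrable M (indicator E :: 'a \<Rightarrow> real)"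
    using E by (simp add: emeasure_eq_measure)
  have "2 - prob E = (\<integral>\<omega>. 2 - indicator E \<omega> \<partial>M)"
    using E ind by (simp add: prob_space)
  also have "\<dots> \<le> (\<integral>\<omega>. X \<omega> \<partial>M)"
  proof (rule integral_mono[OF _ X])
    show "integrable M (\<lambda>\<omega>. 2 - indicator E \<omega> :: real)"
      using ind by (intro Bochner_Integration.integrable_diff) auto
    show "2 - indicator E \<omega> \<le> X \<omega>" if "\<omega> \<in> space M" for \<omega>
      using that assms(3,4) by (auto simp: indicator_def)
  qed
  finally show ?thesis .
qed

lemma conflict_free_event:
  assumes "(\<lambda>\<omega>. A \<omega> F) \<in> M \<rightarrow>\<^sub>M count_space UNIV"
  shows "{\<omega> \<in> space M. conflict_free F (A \<omega> F)} \<in> sets M"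
proof -
  have "{\<omega> \<in> space M. conflict_free F (A \<omega> F)} = (\<lambda>\<omega>. A \<omega> F) -` {r. conflict_free F r} \<inter> space M"
    by auto
  also have "\<dots> \<in> sets M" using assms by (rule measurable_sets) simp
  finally show ?thesis .
qed

lemma expected_congestion_ge_two_minus_prob:
  assumes "prob_space M" and det: "\<forall>\<omega>\<in>space M. det_online_alg N R (A \<omega>)"
    and meas: "(\<lambda>\<omega>. A \<omega> F) \<in> M \<rightarrow>\<^sub>M count_space UNIV"
    and valid: "valid_seq N R F" and unit: "\<forall>f\<in>set F. dem f = 1" and "F \<noteq> []"
  shows "2 - measure M {\<omega> \<in> space M. conflict_free F (A \<omega> F)}
    \<le> (\<integral>\<omega>. congestion N R F (A \<omega> F) \<partial>M)"
proof -
  interpret prob_space M by fact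
  have routing: "is_routing N F (A \<omega> F)" if "\<omega> \<in> space M" for \<omega>
    using det valid that unfolding det_online_alg_def by blast
  have "0 < R" "0 < N" using valid_seq_pos[OF valid \<open>F \<noteq> []\<close>] by auto
  then have "\<forall>\<omega>\<in>space M. norm (congestion N R F (A \<omega> F)) \<le> length F"
    using one_le_congestion[OF unit valid routing \<open>F \<noteq> []\<close>] congestion_le_length[OF unit]
    by fastforce
  then have "integrable M (\<lambda>\<omega>. congestion N R F (A \<omega> F))"
    using measurable_compose[OF meas, of "congestion N R F" borel]
    by (intro integrable_const_bound[where B = "length F"] AE_I2) auto
  then show ?thesis
    using conflict_free_event[of A F M, OF meas] one_le_congestion[OF unit valid routing \<open>F \<noteq> []\<close>]
      two_le_congestion_if_not_conflict_free[OF unit valid routing]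
    by (intro two_minus_prob_le_integral) auto
qed

lemma ex_gadgets_prob_conflict_free_le:
  assumes "prob_space M" and det: "\<forall>\<omega>\<in>space M. det_online_alg N R (A \<omega>)"
    and meas: "\<And>F. valid_seq N R F \<Longrightarrow> (\<lambda>\<omega>. A \<omega> F) \<in> M \<rightarrow>\<^sub>M count_space UNIV"
    and "2 \<le> N" "3 * S \<le> R"
  shows "\<exists>bs. length bs = S \<and>
    measure M {\<omega> \<in> space M. conflict_free (gadgets N 0 bs) (A \<omega> (gadgets N 0 bs))} \<le> 1 / 2 ^ S"
proof -
  interpret prob_space M by fact
  define E where
    "E bs = {\<omega> \<in> space M. conflict_free (gadgets N 0 bs) (A \<omega> (gadgets N 0 bs))}" for bs
  have "disjoint_family_on E {bs. length bs = S}"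
    using det_online_alg_conflict_free_gadgets_unique[OF _ \<open>2 \<le> N\<close>] det \<open>3 * S \<le> R\<close>
    by (fastforce simp: disjoint_family_on_def E_def)
  moreover have "E ` {bs. length bs = S} \<subseteq> events"
    using conflict_free_event[of A _ M] meas[OF valid_seq_gadgets[OF \<open>2 \<le> N\<close>]] \<open>3 * S \<le> R\<close>
    by (auto simp: E_def)
  moreover have "card {bs :: bool list. length bs = S} = 2 ^ S"
    using card_lists_length_eq[of "UNIV :: bool set" S] by simp
  ultimately show ?thesis
    using ex_prob_le_inverse_card[of "{bs. length bs = S}" E] finite_lists_length_eq[of UNIV S]
    by (fastforce simp: E_def)
qed

theorem mainTheorem7:
  fixes N R :: nat and c :: real
    and M :: "'a measure" and A :: "'a \<Rightarrow> flow list \<Rightarrow> nat list"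
  assumes "N \<ge> 2" and "R \<ge> 3" and "c < 2 - 1 / 2 ^ (R div 3)"
  shows "\<not> randomized_approx N R c M A"
proof
  assume "randomized_approx N R c M A"
  then have M: "prob_space M" and det: "\<forall>\<omega>\<in>space M. det_online_alg N R (A \<omega>)"
    and meas: "\<And>F. valid_seq N R F \<Longrightarrow> (\<lambda>\<omega>. A \<omega> F) \<in> M \<rightarrow>\<^sub>M count_space UNIV"
    and approx: "\<And>F. valid_seq N R F \<Longrightarrow> (\<integral>\<omega>. congestion N R F (A \<omega> F) \<partial>M) \<le> c * OPT N R F"
    unfolding randomized_approx_def by auto
  define S where "S = R div 3"
  have S: "1 \<le> S" "3 * S \<le> R" using \<open>R \<ge> 3\<close> by (auto simp: S_def)
  then obtain bs where bs: "length bs = S" "bs \<noteq> []"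
    and rare: "measure M {\<omega> \<in> space M. conflict_free (gadgets N 0 bs) (A \<omega> (gadgets N 0 bs))}
      \<le> 1 / 2 ^ S"
    using ex_gadgets_prob_conflict_free_le[OF M det meas \<open>N \<ge> 2\<close>] by fastforce
  then have valid: "valid_seq N R (gadgets N 0 bs)" and "3 * length bs \<le> R"
    using valid_seq_gadgets[OF \<open>N \<ge> 2\<close>] S by auto
  have "2 - 1 / 2 ^ S \<le> (\<integral>\<omega>. congestion N R (gadgets N 0 bs) (A \<omega> (gadgets N 0 bs)) \<partial>M)"
    using expected_congestion_ge_two_minus_prob[OF M det meas[OF valid] valid] rare bs(2)
      set_gadgets_servers_demands[OF \<open>N \<ge> 2\<close>]
    by fastforce
  also have "\<dots> \<le> c * OPT N R (gadgets N 0 bs)" by (rule approx[OF valid])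
  also have "\<dots> = c" using OPT_gadgets[OF \<open>N \<ge> 2\<close> \<open>3 * length bs \<le> R\<close> bs(2)] by simp
  finally show False using assms(3) by (simp add: S_def)
qed

end
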